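(* Let $(\mathcal{X},d)$ be a Polish space and let $c:\mathcal{X}\times\mathcal{X}\to\mathbb{R}^+$ be of the form $c(x,y)=\phi(d(x,y))$, where $\phi:\mathbb{R}^+\to\mathbb{R}^+$ is convex, $\phi(0)=0$, $\phi(x)>0$ for $x>0$, and $\sup_{x>0}\phi(2x)/\phi(x)<\infty$. Define $p_o=\sup_{x>0}x\phi'(x)/\phi(x)$, where $\phi'$ is the right derivative of $\phi$. Then $1\le p_o<\infty$, and $\tilde d(x,y)=c^{1/p_o}(x,y)$ is a distance on $\mathcal{X}$ inducing the same topology as $d$. *)

theory Defs
  imports "HOL-Analysis.Analysis"
begin

definition right_deriv :: "(real \<Rightarrow> real) \<Rightarrow> real \<Rightarrow> real" where
  "right_deriv f x = Lim (at_right 0) (\<lambda>h. (f (x + h) - f x) / h)"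

definition p_o :: "(real \<Rightarrow> real) \<Rightarrow> real" where
  "p_o \<phi> = Sup {x * right_deriv \<phi> x / \<phi> x | x. x > 0}"

end

theory Submission imports Defs begin

text \<open>
  Write \<open>p = p_o \<phi>\<close>. Convexity gives \<open>\<phi>(x)/x \<le> \<phi>'(x) \<le> (\<phi>(2x) - \<phi>(x))/x\<close>, so the doubling
  condition bounds \<open>x \<phi>'(x)/\<phi>(x)\<close> and the value at \<open>x = 1\<close> shows \<open>p \<ge> 1\<close>.
  Since \<open>u \<phi>'(u) \<le> p \<phi>(u)\<close>, the function \<open>\<phi>(u)/u\<^sup>p\<close> is nonincreasing (only one-sided
  derivatives are available, so this uses a monotonicity criterion for right derivatives), i.e. \<open>\<psi> = \<phi>\<^bsup>1/p\<^esup>\<close>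
  satisfies \<open>\<psi>(t)/t\<close> nonincreasing; hence \<open>\<psi>\<close> is subadditive. An increasing subadditive
  \<open>\<psi>\<close> vanishing only at \<open>0\<close> turns \<open>d\<close> into a metric \<open>\<psi> \<circ> d\<close>, and since moreover \<open>\<psi>(t) \<rightarrow> 0\<close>
  as \<open>t \<rightarrow> 0\<close>, the balls of both metrics are nested into each other.
\<close>

lemma right_DERIV_nonpos_imp_decreasing_eps:
  fixes F D :: "real \<Rightarrow> real"
  assumes ab: "a < b" and cont: "continuous_on {a..b} F"
    and der: "\<And>u. u \<in> {a..<b} \<Longrightarrow> (F has_real_derivative D u) (at_right u) \<and> D u \<le> 0"
    and e: "e > 0"
  shows "F b \<le> F a + e * (b - a)"
proof (rule ccontr)
  assume contra: "\<not> ?thesis"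
  define G where "G v = F v - F a - e * (v - a)" for v
  have Gb: "G b > 0" using contra by (simp add: G_def)
  have contG: "continuous_on {a..b} G" unfolding G_def by (intro continuous_intros cont)
  \<comment> \<open>At the last point \<open>m\<close> with \<open>G m \<le> 0\<close>, the right derivative of \<open>G\<close> is negative,
      contradicting \<open>G > 0\<close> on \<open>(m, b]\<close>.\<close>
  define T where "T = {a..b} \<inter> G -` {..0}"
  have "closed T" unfolding T_def by (rule continuous_closed_preimage[OF contG]) auto
  moreover have "a \<in> T" using ab by (simp add: T_def G_def)
  moreover have bdd: "bdd_above T" unfolding T_def by (rule bdd_aboveI[of _ b]) auto
  ultimately have mT: "Sup T \<in> T" using closed_contains_Sup by blast
  define m where "m = Sup T"
  have mb: "m < b" using mT Gb by (auto simp: T_def m_def) (metis antisym_conv2 not_le)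
  have ma: "a \<le> m" using mT by (auto simp: T_def m_def)
  have after: "G v > 0" if v: "v \<in> {m<..b}" for v
  proof (rule ccontr)
    assume "\<not> G v > 0"
    hence "v \<in> T" using v ma by (auto simp: T_def)
    hence "v \<le> m" unfolding m_def using bdd by (rule cSup_upper)
    thus False using v by auto
  qed
  from der[of m] mb ma have dm: "(F has_real_derivative D m) (at_right m)" and Dm: "D m \<le> 0"
    by auto
  have "(G has_real_derivative D m - e) (at_right m)"
    unfolding G_def by (rule derivative_eq_intros dm | simp)+
  hence lim: "((\<lambda>y. (G y - G m) / (y - m)) \<longlongrightarrow> D m - e) (at_right m)"
    by (simp add: has_field_derivative_iff)
  have "eventually (\<lambda>y. (G y - G m) / (y - m) < 0) (at_right m)"
    using order_tendstoD(2)[OF lim] Dm e by auto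
  moreover have "eventually (\<lambda>y. m < y \<and> y < b) (at_right m)"
    using eventually_at_right_real[OF mb] by simp
  ultimately have "eventually (\<lambda>y. (G y - G m) / (y - m) < 0 \<and> m < y \<and> y < b) (at_right m)"
    by (rule eventually_conj)
  then obtain y where y: "(G y - G m) / (y - m) < 0" "m < y" "y < b"
    using eventually_happens[of _ "at_right m"] by (auto simp: trivial_limit_at_right_real)
  have "G m \<le> 0" using mT by (simp add: T_def m_def)
  moreover have "G y - G m < 0" using y by (simp add: divide_less_0_iff)
  moreover have "G y > 0" using after[of y] y by auto
  ultimately show False by linarith
qed

lemma right_DERIV_nonpos_imp_decreasing:
  fixes F D :: "real \<Rightarrow> real"
  assumes ab: "a \<le> b" and cont: "continuous_on {a..b} F"
    and der: "\<And>u. u \<in> {a..<b} \<Longrightarrow> (F has_real_derivative D u) (at_right u) \<and> D u \<le> 0"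
  shows "F b \<le> F a"
proof (cases "a = b")
  case False
  hence ab': "a < b" using ab by simp
  show ?thesis
  proof (rule field_le_epsilon)
    fix e :: real assume e: "e > 0"
    have "F b \<le> F a + (e / (b - a)) * (b - a)"
      by (rule right_DERIV_nonpos_imp_decreasing_eps[OF ab' cont der]) (use e ab' in auto)
    thus "F b \<le> F a + e" using ab' by simp
  qed
qed simp

lemma tendsto_Inf_at_right_if_mono:
  fixes q :: "real \<Rightarrow> real"
  assumes mono: "\<And>h1 h2. a < h1 \<Longrightarrow> h1 \<le> h2 \<Longrightarrow> q h1 \<le> q h2"
    and bdd: "bdd_below (q ` {a<..})"
  shows "(q \<longlongrightarrow> Inf (q ` {a<..})) (at_right a)"
proof (rule order_tendstoI)
  fix y assume "y < Inf (q ` {a<..})"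
  hence "y < q h" if "h > a" for h
    using cInf_lower[OF _ bdd, of "q h"] that by fastforce
  thus "eventually (\<lambda>h. y < q h) (at_right a)"
    by (intro eventually_mono[OF eventually_at_right_less[of a]]) simp
next
  fix y assume "Inf (q ` {a<..}) < y"
  then obtain h0 where h0: "h0 > a" "q h0 < y"
    using cInf_less_iff[of "q ` {a<..}" y] bdd by auto
  have "eventually (\<lambda>h. a < h \<and> h < h0) (at_right a)"
    using eventually_at_right_real[OF h0(1)] by simp
  thus "eventually (\<lambda>h. q h < y) (at_right a)"
    by (rule eventually_mono) (use mono h0 in \<open>meson less_imp_le le_less_trans\<close>)
qed

lemma convex_on_right_deriv:
  fixes \<phi> :: "real \<Rightarrow> real"
  assumes conv: "convex_on {0..} \<phi>" and x: "x > 0"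
  shows "(\<phi> has_real_derivative right_deriv \<phi> x) (at_right x)"
    and "(\<phi> x - \<phi> 0) / x \<le> right_deriv \<phi> x"
    and "h > 0 \<Longrightarrow> right_deriv \<phi> x \<le> (\<phi> (x + h) - \<phi> x) / h"
proof -
  define q where "q h = (\<phi> (x + h) - \<phi> x) / h" for h
  have slope_mono: "q h1 \<le> q h2" if h: "0 < h1" "h1 \<le> h2" for h1 h2
  proof (cases "h1 = h2")
    case False
    have "(\<phi> x - \<phi> (x + h1)) / (x - (x + h1)) \<le> (\<phi> x - \<phi> (x + h2)) / (x - (x + h2))"
      by (rule convex_on_slope_le(1)[OF conv]) (use x h False in auto)
    thus ?thesis using h by (simp add: q_def field_simps)
  qed simp
  have chord_le: "(\<phi> x - \<phi> 0) / x \<le> q h" if h: "h > 0" for h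
  proof -
    have "(\<phi> 0 - \<phi> x) / (0 - x) \<le> (\<phi> 0 - \<phi> (x + h)) / (0 - (x + h))"
      by (rule convex_on_slope_le(1)[OF conv]) (use x h in auto)
    also have "\<dots> \<le> (\<phi> x - \<phi> (x + h)) / (x - (x + h))"
      by (rule convex_on_slope_le(2)[OF conv]) (use x h in auto)
    finally show ?thesis using x h by (simp add: q_def field_simps)
  qed
  define L where "L = Inf (q ` {0<..})"
  have bdd: "bdd_below (q ` {0<..})" using chord_le by (intro bdd_belowI2) auto
  have tq: "(q \<longlongrightarrow> L) (at_right 0)"
    unfolding L_def using slope_mono bdd by (rule tendsto_Inf_at_right_if_mono) auto
  have rd: "right_deriv \<phi> x = L"
    unfolding right_deriv_def using tq unfolding q_def[abs_def]
    by (intro tendsto_Lim) (auto simp: trivial_limit_at_right_real)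
  have "((\<lambda>y. (\<phi> y - \<phi> x) / (y - x)) \<longlongrightarrow> L) (at_right x)"
    unfolding filterlim_at_right_to_0[of _ _ x] using tq by (simp add: q_def[abs_def] add.commute)
  thus "(\<phi> has_real_derivative right_deriv \<phi> x) (at_right x)"
    by (simp add: has_field_derivative_iff rd)
  show "(\<phi> x - \<phi> 0) / x \<le> right_deriv \<phi> x"
    unfolding rd L_def using chord_le by (intro cInf_greatest) auto
  show "right_deriv \<phi> x \<le> (\<phi> (x + h) - \<phi> x) / h" if "h > 0"
    unfolding rd L_def q_def[symmetric] using bdd that by (intro cInf_lower) auto
qed

lemma convex_on_zero_le_scaled:
  fixes \<phi> :: "real \<Rightarrow> real"
  assumes conv: "convex_on {0..} \<phi>" and zero: "\<phi> 0 = 0"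
    and st: "0 \<le> s" "s \<le> t" "t > 0"
  shows "\<phi> s \<le> s / t * \<phi> t"
  using convex_onD_Icc'[OF convex_on_subset[OF conv], of 0 t s] st zero by (simp add: mult.commute)

lemma convex_on_zero_mono:
  fixes \<phi> :: "real \<Rightarrow> real"
  assumes conv: "convex_on {0..} \<phi>" and zero: "\<phi> 0 = 0"
    and nonneg: "\<And>t. t \<ge> 0 \<Longrightarrow> \<phi> t \<ge> 0"
  shows "mono_on {0..} \<phi>"
proof (rule mono_onI)
  fix s t :: real assume st: "s \<in> {0..}" "s \<le> t"
  show "\<phi> s \<le> \<phi> t"
  proof (cases "t = 0")
    case False
    hence "\<phi> s \<le> s / t * \<phi> t" using convex_on_zero_le_scaled[OF conv zero] st by simp
    also have "\<dots> \<le> 1 * \<phi> t" using st False nonneg[of t] by (intro mult_right_mono) auto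
    finally show ?thesis by simp
  qed (use st in simp)
qed

lemma convex_on_zero_tendsto_at_right:
  fixes \<phi> :: "real \<Rightarrow> real"
  assumes conv: "convex_on {0..} \<phi>" and zero: "\<phi> 0 = 0"
    and nonneg: "\<And>t. t \<ge> 0 \<Longrightarrow> \<phi> t \<ge> 0"
  shows "(\<phi> \<longlongrightarrow> 0) (at_right 0)"
proof (rule tendsto_sandwich[OF _ _ tendsto_const])
  show "\<forall>\<^sub>F t in at_right 0. 0 \<le> \<phi> t"
    using eventually_at_right_less[of 0] by eventually_elim (use nonneg in simp)
  show "\<forall>\<^sub>F t in at_right 0. \<phi> t \<le> t * \<phi> 1"
    using eventually_at_right_real[OF zero_less_one]
    by eventually_elim (use convex_on_zero_le_scaled[OF conv zero, of _ 1] in auto)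
  show "((\<lambda>t. t * \<phi> 1) \<longlongrightarrow> 0) (at_right 0)" by (intro tendsto_eq_intros) auto
qed

lemma bdd_above_growth_if_doubling:
  fixes \<phi> :: "real \<Rightarrow> real"
  assumes conv: "convex_on {0..} \<phi>"
    and pos: "\<And>x. x > 0 \<Longrightarrow> \<phi> x > 0"
    and doubling: "bdd_above {\<phi> (2 * x) / \<phi> x | x. x > 0}"
  shows "bdd_above {x * right_deriv \<phi> x / \<phi> x | x. x > 0}"
proof -
  obtain B where B: "\<And>x. x > 0 \<Longrightarrow> \<phi> (2 * x) / \<phi> x \<le> B"
    using doubling unfolding bdd_above_def by blast
  have "x * right_deriv \<phi> x / \<phi> x \<le> B - 1" if x: "x > 0" for x
  proof -
    have "right_deriv \<phi> x \<le> (\<phi> (2 * x) - \<phi> x) / x"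
      using convex_on_right_deriv(3)[OF conv x x] by (metis mult_2)
    hence "x * right_deriv \<phi> x \<le> \<phi> (2 * x) - \<phi> x"
      using x by (simp add: pos_le_divide_eq mult.commute)
    hence "x * right_deriv \<phi> x / \<phi> x \<le> (\<phi> (2 * x) - \<phi> x) / \<phi> x"
      using pos[OF x] by (rule divide_right_mono[OF _ less_imp_le])
    also have "\<dots> = \<phi> (2 * x) / \<phi> x - 1"
      using pos[OF x] by (simp add: diff_divide_distrib)
    finally show ?thesis using B[OF x] by simp
  qed
  thus ?thesis by (intro bdd_aboveI[of _ "B - 1"]) blast
qed

lemma right_deriv_le_p_o:
  fixes \<phi> :: "real \<Rightarrow> real"
  assumes pos: "\<phi> x > 0" and x: "x > 0"
    and bdd: "bdd_above {x * right_deriv \<phi> x / \<phi> x | x. x > 0}"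
  shows "x * right_deriv \<phi> x \<le> p_o \<phi> * \<phi> x"
proof -
  have "x * right_deriv \<phi> x / \<phi> x \<le> p_o \<phi>"
    unfolding p_o_def using bdd x by (intro cSup_upper) auto
  thus ?thesis using pos by (simp add: pos_divide_le_eq)
qed

lemma one_le_p_o:
  fixes \<phi> :: "real \<Rightarrow> real"
  assumes conv: "convex_on {0..} \<phi>" and zero: "\<phi> 0 = 0" and pos: "\<phi> 1 > 0"
    and bdd: "bdd_above {x * right_deriv \<phi> x / \<phi> x | x. x > 0}"
  shows "1 \<le> p_o \<phi>"
proof -
  have "\<phi> 1 \<le> right_deriv \<phi> 1"
    using convex_on_right_deriv(2)[OF conv, of 1] zero by simp
  hence "1 \<le> 1 * right_deriv \<phi> 1 / \<phi> 1" using pos by simp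
  also have "\<dots> \<le> p_o \<phi>"
    unfolding p_o_def by (rule cSup_upper[OF _ bdd]) (auto intro!: exI[of _ 1])
  finally show ?thesis .
qed

lemma convex_on_div_powr_antimono:
  fixes \<phi> :: "real \<Rightarrow> real"
  assumes conv: "convex_on {0..} \<phi>"
    and growth: "\<And>u. u > 0 \<Longrightarrow> u * right_deriv \<phi> u \<le> p * \<phi> u"
    and st: "0 < s" "s \<le> t"
  shows "\<phi> t / t powr p \<le> \<phi> s / s powr p"
proof -
  define D where "D u = right_deriv \<phi> u * u powr (-p) + (-p * u powr (-p - 1)) * \<phi> u" for u
  have "continuous_on {0<..} \<phi>"
    by (rule convex_on_continuous) (auto intro: convex_on_subset[OF conv])
  hence "continuous_on {s..t} \<phi>" by (rule continuous_on_subset) (use st in auto)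
  hence "continuous_on {s..t} (\<lambda>u. \<phi> u * u powr - p)"
    using st by (intro continuous_intros) auto
  moreover have "((\<lambda>u. \<phi> u * u powr (-p)) has_real_derivative D u) (at_right u) \<and> D u \<le> 0"
    if "u \<in> {s..<t}" for u
  proof
    have u: "u > 0" using that st by auto
    show "((\<lambda>u. \<phi> u * u powr (-p)) has_real_derivative D u) (at_right u)"
      unfolding D_def using convex_on_right_deriv(1)[OF conv u]
        has_field_derivative_at_within[OF has_real_derivative_powr[OF u]]
      by (rule DERIV_mult)
    have "u powr (-p - 1) = u powr (-p) / u" using u by (simp add: powr_diff)
    hence "D u = u powr (-p) / u * (u * right_deriv \<phi> u - p * \<phi> u)"
      using u by (simp add: D_def field_simps)
    also have "\<dots> \<le> 0" using growth[OF u] u by (intro mult_nonneg_nonpos) auto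
    finally show "D u \<le> 0" .
  qed
  ultimately have "\<phi> t * t powr (-p) \<le> \<phi> s * s powr (-p)"
    by (rule right_DERIV_nonpos_imp_decreasing[OF st(2)])
  thus ?thesis by (simp add: powr_minus divide_inverse)
qed

lemma subadditive_if_div_antimono:
  fixes f :: "real \<Rightarrow> real"
  assumes f0: "0 \<le> f 0"
    and antimono: "\<And>s t. 0 < s \<Longrightarrow> s \<le> t \<Longrightarrow> f t / t \<le> f s / s"
    and ab: "0 \<le> a" "0 \<le> b"
  shows "f (a + b) \<le> f a + f b"
proof (cases "a = 0 \<or> b = 0")
  case False
  hence a: "a > 0" and b: "b > 0" using ab by auto
  have "f (a + b) = (a + b) * (f (a + b) / (a + b))" using a b by simp
  also have "\<dots> = a * (f (a + b) / (a + b)) + b * (f (a + b) / (a + b))"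
    by (rule distrib_right)
  also have "\<dots> \<le> a * (f a / a) + b * (f b / b)"
    using antimono[of a "a + b"] antimono[of b "a + b"] a b
    by (intro add_mono mult_left_mono) auto
  finally show ?thesis using a b by simp
qed (use f0 in auto)

lemma powr_inverse_subadditive:
  fixes \<phi> :: "real \<Rightarrow> real"
  assumes p: "p > 0"
    and nonneg: "\<And>t. t \<ge> 0 \<Longrightarrow> \<phi> t \<ge> 0"
    and antimono: "\<And>s t. 0 < s \<Longrightarrow> s \<le> t \<Longrightarrow> \<phi> t / t powr p \<le> \<phi> s / s powr p"
    and ab: "0 \<le> a" "0 \<le> b"
  shows "\<phi> (a + b) powr (1 / p) \<le> \<phi> a powr (1 / p) + \<phi> b powr (1 / p)"
proof (rule subadditive_if_div_antimono[OF _ _ ab])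
  have root: "\<phi> t powr (1 / p) / t = (\<phi> t / t powr p) powr (1 / p)" if "t > 0" for t
    using p that nonneg[of t] by (simp add: powr_divide powr_powr)
  show "\<phi> t powr (1 / p) / t \<le> \<phi> s powr (1 / p) / s" if st: "0 < s" "s \<le> t" for s t
  proof -
    have "0 < t" using st by simp
    thus ?thesis
      unfolding root[OF st(1)] root[OF \<open>0 < t\<close>] using antimono[OF st] nonneg[of t] p
      by (intro powr_mono2) auto
  qed
qed simp

lemma Metric_space_comp_dist:
  fixes \<psi> :: "real \<Rightarrow> real"
  assumes mono: "mono_on {0..} \<psi>"
    and subadd: "\<And>a b. 0 \<le> a \<Longrightarrow> 0 \<le> b \<Longrightarrow> \<psi> (a + b) \<le> \<psi> a + \<psi> b"
    and zero_iff: "\<And>t. 0 \<le> t \<Longrightarrow> \<psi> t = 0 \<longleftrightarrow> t = 0"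
  shows "Metric_space (UNIV :: 'a::metric_space set) (\<lambda>x y. \<psi> (dist x y))"
proof
  fix x y z :: 'a
  show "0 \<le> \<psi> (dist x y)"
    using mono_onD[OF mono, of 0 "dist x y"] zero_iff[of 0] by simp
  show "\<psi> (dist x y) = \<psi> (dist y x)" by (simp add: dist_commute)
  show "\<psi> (dist x y) = 0 \<longleftrightarrow> x = y" using zero_iff[of "dist x y"] by simp
  have "\<psi> (dist x z) \<le> \<psi> (dist x y + dist y z)"
    by (rule mono_onD[OF mono]) (auto intro: dist_triangle)
  also have "\<dots> \<le> \<psi> (dist x y) + \<psi> (dist y z)" by (rule subadd) auto
  finally show "\<psi> (dist x z) \<le> \<psi> (dist x y) + \<psi> (dist y z)" .
qed

lemma mtopology_comp_dist_eq_euclidean: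
  fixes \<psi> :: "real \<Rightarrow> real"
  assumes mono: "mono_on {0..} \<psi>"
    and subadd: "\<And>a b. 0 \<le> a \<Longrightarrow> 0 \<le> b \<Longrightarrow> \<psi> (a + b) \<le> \<psi> a + \<psi> b"
    and zero_iff: "\<And>t. 0 \<le> t \<Longrightarrow> \<psi> t = 0 \<longleftrightarrow> t = 0"
    and lim: "(\<psi> \<longlongrightarrow> 0) (at_right 0)"
  shows "Metric_space.mtopology (UNIV :: 'a::metric_space set) (\<lambda>x y. \<psi> (dist x y)) = euclidean"
proof -
  interpret M: Metric_space "UNIV :: 'a set" "\<lambda>x y. \<psi> (dist x y)"
    by (rule Metric_space_comp_dist[OF mono subadd zero_iff])
  have ball_in_mball: "\<exists>e>0. ball x e \<subseteq> M.mball x r" if r: "r > 0" for x :: 'a and r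
  proof -
    obtain e where e: "e > 0" "\<And>t. 0 < t \<Longrightarrow> t < e \<Longrightarrow> \<psi> t < r"
      using order_tendstoD(2)[OF lim r] unfolding eventually_at_right_field by auto
    have "\<psi> t < r" if "0 \<le> t" "t < e" for t
      using e(2)[of t] zero_iff[of 0] r that by (cases "t = 0") auto
    thus ?thesis using e(1) by auto
  qed
  have mball_in_ball: "M.mball x (\<psi> e) \<subseteq> ball x e" if e: "e > 0" for x :: 'a and e
  proof
    fix y assume "y \<in> M.mball x (\<psi> e)"
    hence "\<psi> (dist x y) < \<psi> e" by simp
    thus "y \<in> ball x e"
      using mono_onD[OF mono, of e "dist x y"] e by (auto simp: not_less[symmetric])
  qed
  have psi_pos: "\<psi> e > 0" if "e > 0" for e
  proof -
    have "\<psi> 0 \<le> \<psi> e" using that by (intro mono_onD[OF mono]) auto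
    moreover have "\<psi> 0 = 0" "\<psi> e \<noteq> 0" using zero_iff[of 0] zero_iff[of e] that by auto
    ultimately show ?thesis by linarith
  qed
  show ?thesis
  proof (rule topology_eq[THEN iffD2], intro allI iffI)
    fix U :: "'a set"
    assume "openin M.mtopology U"
    thus "openin euclidean U"
      unfolding M.openin_mtopology open_openin[symmetric] open_contains_ball
      by (metis ball_in_mball subset_trans)
  next
    fix U :: "'a set"
    assume "openin euclidean U"
    thus "openin M.mtopology U"
      unfolding M.openin_mtopology open_openin[symmetric] open_contains_ball
      by (metis mball_in_ball psi_pos subset_trans subset_UNIV)
  qed
qed

theorem lemma2p1:
  fixes \<phi> :: "real \<Rightarrow> real"
  assumes conv: "convex_on {0..} \<phi>"
    and nonneg: "\<And>x. x \<ge> 0 \<Longrightarrow> \<phi> x \<ge> 0"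
    and zero: "\<phi> 0 = 0"
    and pos: "\<And>x. x > 0 \<Longrightarrow> \<phi> x > 0"
    and doubling: "bdd_above {\<phi> (2 * x) / \<phi> x | x. x > 0}"
  shows "bdd_above {x * right_deriv \<phi> x / \<phi> x | x. x > 0}
     \<and> 1 \<le> p_o \<phi>
     \<and> Metric_space (UNIV :: 'a :: polish_space set)
          (\<lambda>x y. \<phi> (dist x y) powr (1 / p_o \<phi>))
     \<and> Metric_space.mtopology (UNIV :: 'a set)
          (\<lambda>x y. \<phi> (dist x y) powr (1 / p_o \<phi>)) = euclidean"
proof -
  have bdd: "bdd_above {x * right_deriv \<phi> x / \<phi> x | x. x > 0}"
    by (rule bdd_above_growth_if_doubling[OF conv pos doubling])
  have p1: "1 \<le> p_o \<phi>" by (rule one_le_p_o[OF conv zero pos bdd]) simp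
  define \<psi> where "\<psi> t = \<phi> t powr (1 / p_o \<phi>)" for t
  have phi_mono: "\<phi> s \<le> \<phi> t" if "0 \<le> s" "s \<le> t" for s t
    using mono_onD[OF convex_on_zero_mono[OF conv zero nonneg]] that by simp
  have mono: "mono_on {0..} \<psi>"
    unfolding \<psi>_def by (intro mono_onI powr_mono2) (use p1 nonneg phi_mono in auto)
  have zero_iff: "\<psi> t = 0 \<longleftrightarrow> t = 0" if "0 \<le> t" for t
    using that pos[of t] zero by (cases "t = 0") (auto simp: \<psi>_def)
  have growth: "u * right_deriv \<phi> u \<le> p_o \<phi> * \<phi> u" if "u > 0" for u
    by (rule right_deriv_le_p_o[OF pos[OF that] that bdd])
  have subadd: "\<psi> (a + b) \<le> \<psi> a + \<psi> b" if "0 \<le> a" "0 \<le> b" for a b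
    unfolding \<psi>_def
    by (rule powr_inverse_subadditive[OF _ nonneg convex_on_div_powr_antimono[OF conv growth] that])
      (use p1 in auto)
  have "\<forall>\<^sub>F t in at_right 0. 0 \<le> \<phi> t"
    using eventually_at_right_less[of 0] by eventually_elim (use nonneg in simp)
  hence lim: "(\<psi> \<longlongrightarrow> 0) (at_right 0)"
    unfolding \<psi>_def[abs_def] using p1
    by (intro tendsto_zero_powrI[OF convex_on_zero_tendsto_at_right[OF conv zero nonneg] tendsto_const])
      auto
  show ?thesis
    using bdd p1 Metric_space_comp_dist[OF mono subadd zero_iff]
      mtopology_comp_dist_eq_euclidean[OF mono subadd zero_iff lim]
    unfolding \<psi>_def by blast
qed

end
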